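(* Let $G$ be a finite group acting principally on $X$ and $n\ge 2$. Then the sectional category of $\tilde\epsilon_n : M^{G,n}(X)\to X^n$, $(\alpha_1,\ldots,\alpha_n)\mapsto(\alpha_1(1),\ldots,\alpha_n(1))$, equals $\mathsf{TC}^G_{\mathsf{effv},n}(X)$.
   Context: All spaces are Hausdorff, path-connected and locally path-connected; $G$ acts on the right. $PX$ is the path space with compact-open topology. $M^G_n(X)$ is the subspace of $PX\times G\times\cdots\times G\times PX$ ($n$ path factors, $n-1$ group factors) of tuples $(\alpha_1,g_1,\ldots,g_{n-1},\alpha_n)$ with $\alpha_i(0)g_i=\alpha_{i+1}(0)$; $\epsilon_n:M^G_n(X)\to X^n$ sends such a tuple to $(\alpha_1(1),\ldots,\alpha_n(1))$, and $\mathsf{TC}^G_{\mathsf{effv},n}(X)$ is the (non-reduced) sectional category of $\epsilon_n$, i.e. the least number of open sets covering $X^n$ each admitting a continuous local section. $M^{G,n}(X)=\{(\alpha_1,\ldots,\alpha_n)\in(PX)^n:\alpha_i(0)G=\alpha_j(0)G\}$. The action is principal if it is free and $(x,xg)\mapsto g$ is continuous on $\{(x,xg)\}$. *)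

theory Defs
  imports "HOL-Analysis.Analysis" "HOL-Algebra.Group"
begin

definition has_local_section ::
  "'e topology \<Rightarrow> 'b topology \<Rightarrow> ('e \<Rightarrow> 'b) \<Rightarrow> 'b set \<Rightarrow> bool" where
  "has_local_section E B p U \<longleftrightarrow>
     (\<exists>s. continuous_map (subtopology B U) E s \<and> (\<forall>b\<in>U. p (s b) = b))"

text \<open>Least number k of open sets covering the base, each admitting a continuous
  local section; infinity if no finite such cover exists.\<close>
definition secat :: "'e topology \<Rightarrow> 'b topology \<Rightarrow> ('e \<Rightarrow> 'b) \<Rightarrow> enat" where
  "secat E B p = Inf {enat k | k. \<exists>U :: nat \<Rightarrow> 'b set.
      (\<forall>i<k. openin B (U i) \<and> has_local_section E B p (U i)) \<and>
      topspace B \<subseteq> (\<Union>i<k. U i)}"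

definition paths :: "'a topology \<Rightarrow> (real \<Rightarrow> 'a) set" where
  "paths X = {\<alpha>. pathin X \<alpha> \<and> (\<forall>t. t \<notin> {0..1} \<longrightarrow> \<alpha> t = undefined)}"

definition path_space :: "'a topology \<Rightarrow> (real \<Rightarrow> 'a) topology" where
  "path_space X = subtopology
     (topology_generated_by
        {{\<alpha>. \<alpha> ` K \<subseteq> V} | K V. compactin (top_of_set {0..1}) K \<and> openin X V})
     (paths X)"

text \<open>A (continuous) right action of the finite (hence discrete) group G on X.\<close>
definition right_action ::
  "'a topology \<Rightarrow> ('g, 'm) monoid_scheme \<Rightarrow> ('a \<Rightarrow> 'g \<Rightarrow> 'a) \<Rightarrow> bool" where
  "right_action X G \<phi> \<longleftrightarrow>
     continuous_map (prod_topology X (discrete_topology (carrier G))) X (\<lambda>(x, g). \<phi> x g) \<and>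
     (\<forall>x\<in>topspace X. \<phi> x \<one>\<^bsub>G\<^esub> = x) \<and>
     (\<forall>x\<in>topspace X. \<forall>g\<in>carrier G. \<forall>h\<in>carrier G. \<phi> (\<phi> x g) h = \<phi> x (g \<otimes>\<^bsub>G\<^esub> h))"

definition principal_action ::
  "'a topology \<Rightarrow> ('g, 'm) monoid_scheme \<Rightarrow> ('a \<Rightarrow> 'g \<Rightarrow> 'a) \<Rightarrow> bool" where
  "principal_action X G \<phi> \<longleftrightarrow>
     (\<forall>x\<in>topspace X. \<forall>g\<in>carrier G. \<phi> x g = x \<longrightarrow> g = \<one>\<^bsub>G\<^esub>) \<and>
     continuous_map
       (subtopology (prod_topology X X) {(x, \<phi> x g) | x g. x \<in> topspace X \<and> g \<in> carrier G})
       (discrete_topology (carrier G))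
       (\<lambda>(x, y). THE g. g \<in> carrier G \<and> \<phi> x g = y)"

definition orbit :: "('g, 'm) monoid_scheme \<Rightarrow> ('a \<Rightarrow> 'g \<Rightarrow> 'a) \<Rightarrow> 'a \<Rightarrow> 'a set" where
  "orbit G \<phi> x = (\<phi> x) ` carrier G"

definition power_space :: "'a topology \<Rightarrow> nat \<Rightarrow> (nat \<Rightarrow> 'a) topology" where
  "power_space X n = product_topology (\<lambda>_. X) {..<n}"

text \<open>Tuples (alpha_1,g_1,...,g_{n-1},alpha_n) encoded as (alpha, g) with alpha indexed by
  {0..<n} and g indexed by {0..<n-1}; condition alpha_i(0) g_i = alpha_{i+1}(0).\<close>
definition MG_space :: "'a topology \<Rightarrow> ('g, 'm) monoid_scheme \<Rightarrow> ('a \<Rightarrow> 'g \<Rightarrow> 'a) \<Rightarrow> nat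
    \<Rightarrow> ((nat \<Rightarrow> real \<Rightarrow> 'a) \<times> (nat \<Rightarrow> 'g)) topology" where
  "MG_space X G \<phi> n = subtopology
     (prod_topology (product_topology (\<lambda>_. path_space X) {..<n})
                    (product_topology (\<lambda>_. discrete_topology (carrier G)) {..<n - 1}))
     {(\<alpha>, g). \<forall>i < n - 1. \<phi> (\<alpha> i 0) (g i) = \<alpha> (Suc i) 0}"

definition eps :: "nat \<Rightarrow> (nat \<Rightarrow> real \<Rightarrow> 'a) \<times> (nat \<Rightarrow> 'g) \<Rightarrow> (nat \<Rightarrow> 'a)" where
  "eps n = (\<lambda>(\<alpha>, g). (\<lambda>i\<in>{..<n}. \<alpha> i 1))"

definition TC_effv :: "'a topology \<Rightarrow> ('g, 'm) monoid_scheme \<Rightarrow> ('a \<Rightarrow> 'g \<Rightarrow> 'a) \<Rightarrow> nat \<Rightarrow> enat" where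
  "TC_effv X G \<phi> n = secat (MG_space X G \<phi> n) (power_space X n) (eps n)"

definition MGn_space :: "'a topology \<Rightarrow> ('g, 'm) monoid_scheme \<Rightarrow> ('a \<Rightarrow> 'g \<Rightarrow> 'a) \<Rightarrow> nat
    \<Rightarrow> (nat \<Rightarrow> real \<Rightarrow> 'a) topology" where
  "MGn_space X G \<phi> n = subtopology
     (product_topology (\<lambda>_. path_space X) {..<n})
     {\<alpha>. \<forall>i<n. \<forall>j<n. orbit G \<phi> (\<alpha> i 0) = orbit G \<phi> (\<alpha> j 0)}"

definition eps_tilde :: "nat \<Rightarrow> (nat \<Rightarrow> real \<Rightarrow> 'a) \<Rightarrow> (nat \<Rightarrow> 'a)" where
  "eps_tilde n = (\<lambda>\<alpha>. (\<lambda>i\<in>{..<n}. \<alpha> i 1))"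

end

theory Submission
  imports Defs
begin

text \<open>Forgetting the group elements maps \<open>M^G_n(X)\<close> to \<open>M^{G,n}(X)\<close> over \<open>X^n\<close>, since
  consecutive initial points of a tuple in \<open>M^G_n(X)\<close> lie in one orbit. Conversely, for a
  principal action the element \<open>g_i\<close> with \<open>\<alpha>_i(0) g_i = \<alpha>_{i+1}(0)\<close> is unique and depends
  continuously on the pair of points, which gives a map back over \<open>X^n\<close>. Sectional category
  can only decrease along a map over the base, so the two sectional categories agree.\<close>

lemma has_local_section_fibrewise_map:
  assumes f: "continuous_map E E' f" and over: "\<And>e. e \<in> topspace E \<Longrightarrow> p' (f e) = p e"
    and U: "U \<subseteq> topspace B" and sec: "has_local_section E B p U"
  shows "has_local_section E' B p' U"
proof -
  obtain s where s: "continuous_map (subtopology B U) E s" and ps: "\<forall>b\<in>U. p (s b) = b"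
    using sec unfolding has_local_section_def by blast
  have "s b \<in> topspace E" if "b \<in> U" for b
    using s that U by (auto simp: continuous_map_def)
  then have "\<forall>b\<in>U. p' ((f \<circ> s) b) = b"
    using over ps by simp
  moreover have "continuous_map (subtopology B U) E' (f \<circ> s)"
    using s f by (rule continuous_map_compose)
  ultimately show ?thesis
    unfolding has_local_section_def by blast
qed

lemma secat_le_fibrewise_map:
  assumes "continuous_map E E' f" and "\<And>e. e \<in> topspace E \<Longrightarrow> p' (f e) = p e"
  shows "secat E' B p' \<le> secat E B p"
  unfolding secat_def
proof (rule Inf_superset_mono, clarify)
  fix k and U :: "nat \<Rightarrow> _"
  assume U: "\<forall>i<k. openin B (U i) \<and> has_local_section E B p (U i)"
    and cover: "topspace B \<subseteq> (\<Union>i<k. U i)"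
  have "\<forall>i<k. openin B (U i) \<and> has_local_section E' B p' (U i)"
    using U assms openin_subset by (blast intro: has_local_section_fibrewise_map)
  with cover show "\<exists>k'. enat k = enat k' \<and> (\<exists>U. (\<forall>i<k'. openin B (U i) \<and>
      has_local_section E' B p' (U i)) \<and> topspace B \<subseteq> (\<Union>i<k'. U i))"
    by blast
qed

lemma topspace_path_space: "topspace (path_space X) = paths X"
proof -
  have "UNIV \<in> {{\<alpha>::real \<Rightarrow> 'a. \<alpha> ` K \<subseteq> V} | K V. compactin (top_of_set {0..1}) K \<and> openin X V}"
    by (rule CollectI, rule exI[of _ "{}"], rule exI[of _ "{}"]) auto
  then show ?thesis
    unfolding path_space_def by auto
qed

lemma paths_in_topspace: "\<alpha> \<in> paths X \<Longrightarrow> t \<in> {0..1} \<Longrightarrow> \<alpha> t \<in> topspace X"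
  unfolding paths_def pathin_def continuous_map_def by auto

lemma continuous_map_path_eval:
  assumes t: "t \<in> {0..1}"
  shows "continuous_map (path_space X) X (\<lambda>\<alpha>. \<alpha> t)"
  unfolding continuous_map_def
proof (intro conjI allI impI)
  show "(\<lambda>\<alpha>. \<alpha> t) \<in> topspace (path_space X) \<rightarrow> topspace X"
    using paths_in_topspace t by (auto simp: topspace_path_space)
  fix V assume V: "openin X V"
  let ?S = "{{\<alpha>::real \<Rightarrow> 'a. \<alpha> ` K \<subseteq> V} | K V. compactin (top_of_set {0..1}) K \<and> openin X V}"
  have "{\<alpha>. \<alpha> ` {t} \<subseteq> V} \<in> ?S"
    using V t by (intro CollectI exI[of _ "{t}"] exI[of _ V]) auto
  then have "openin (topology_generated_by ?S) {\<alpha>. \<alpha> ` {t} \<subseteq> V}"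
    by (simp add: openin_topology_generated_by_iff generate_topology_on.Basis)
  then have "openin (path_space X) ({\<alpha>. \<alpha> ` {t} \<subseteq> V} \<inter> paths X)"
    unfolding path_space_def by (rule openin_subtopology_Int)
  moreover have "{\<alpha>. \<alpha> ` {t} \<subseteq> V} \<inter> paths X = {x \<in> topspace (path_space X). x t \<in> V}"
    by (auto simp: topspace_path_space)
  ultimately show "openin (path_space X) {x \<in> topspace (path_space X). x t \<in> V}"
    by simp
qed

lemma orbit_act:
  assumes G: "group G" and act: "right_action X G \<phi>"
    and x: "x \<in> topspace X" and g: "g \<in> carrier G"
  shows "orbit G \<phi> (\<phi> x g) = orbit G \<phi> x"
proof -
  have comp: "\<phi> (\<phi> x g) h = \<phi> x (g \<otimes>\<^bsub>G\<^esub> h)" if "h \<in> carrier G" for h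
    using act x g that unfolding right_action_def by auto
  have "\<phi> x h \<in> \<phi> (\<phi> x g) ` carrier G" if h: "h \<in> carrier G" for h
  proof -
    have cl: "inv\<^bsub>G\<^esub> g \<otimes>\<^bsub>G\<^esub> h \<in> carrier G"
      using G g h by (simp add: group.inv_closed monoid.m_closed group.is_monoid)
    moreover have "g \<otimes>\<^bsub>G\<^esub> (inv\<^bsub>G\<^esub> g \<otimes>\<^bsub>G\<^esub> h) = h"
      using group.inv_solve_left[OF G cl g h] by simp
    ultimately show ?thesis
      using comp by (metis image_eqI)
  qed
  moreover have "\<phi> (\<phi> x g) ` carrier G \<subseteq> \<phi> x ` carrier G"
    using comp G g by (auto intro!: imageI monoid.m_closed group.is_monoid)
  ultimately show ?thesis
    unfolding orbit_def by blast
qed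

lemma principal_action_act_inj:
  assumes G: "group G" and act: "right_action X G \<phi>" and pa: "principal_action X G \<phi>"
    and x: "x \<in> topspace X" and g: "g \<in> carrier G" and h: "h \<in> carrier G"
    and eq: "\<phi> x g = \<phi> x h"
  shows "g = h"
proof -
  have ih: "inv\<^bsub>G\<^esub> h \<in> carrier G"
    using G h by (simp add: group.inv_closed)
  have "\<phi> x (g \<otimes>\<^bsub>G\<^esub> inv\<^bsub>G\<^esub> h) = \<phi> (\<phi> x g) (inv\<^bsub>G\<^esub> h)"
    using act x g ih unfolding right_action_def by auto
  also have "\<dots> = \<phi> (\<phi> x h) (inv\<^bsub>G\<^esub> h)"
    using eq by simp
  also have "\<dots> = x"
    using G act x h ih unfolding right_action_def by (auto simp: group.r_inv)
  finally have "g \<otimes>\<^bsub>G\<^esub> inv\<^bsub>G\<^esub> h = \<one>\<^bsub>G\<^esub>"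
    using pa x G g ih unfolding principal_action_def
    by (auto simp: monoid.m_closed group.is_monoid)
  then show ?thesis
    using G g h ih by (metis group.inv_equality group.inv_inv)
qed

lemma orbit_self:
  assumes "group G" and "right_action X G \<phi>" and "x \<in> topspace X"
  shows "x \<in> orbit G \<phi> x"
proof -
  have "\<phi> x \<one>\<^bsub>G\<^esub> = x"
    using assms unfolding right_action_def by auto
  then show ?thesis
    unfolding orbit_def using assms(1) by (metis image_eqI group.is_monoid monoid.one_closed)
qed

lemma principal_action_the_element:
  assumes G: "group G" and act: "right_action X G \<phi>" and pa: "principal_action X G \<phi>"
    and x: "x \<in> topspace X" and y: "y \<in> orbit G \<phi> x"
  shows "(THE g. g \<in> carrier G \<and> \<phi> x g = y) \<in> carrier G \<and>
    \<phi> x (THE g. g \<in> carrier G \<and> \<phi> x g = y) = y"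
proof (rule theI')
  obtain g where g: "g \<in> carrier G" "\<phi> x g = y"
    using y unfolding orbit_def by auto
  show "\<exists>!g. g \<in> carrier G \<and> \<phi> x g = y"
  proof (rule ex1I[of _ g])
    fix h assume "h \<in> carrier G \<and> \<phi> x h = y"
    then show "h = g"
      using principal_action_act_inj[OF G act pa x, of h g] g by auto
  qed (use g in auto)
qed

lemma continuous_map_MG_forget:
  assumes G: "group G" and act: "right_action X G \<phi>"
  shows "continuous_map (MG_space X G \<phi> n) (MGn_space X G \<phi> n) fst"
proof -
  have orbits: "\<forall>i<n. \<forall>j<n. orbit G \<phi> (\<alpha> i 0) = orbit G \<phi> (\<alpha> j 0)"
    if "(\<alpha>, g) \<in> topspace (MG_space X G \<phi> n)" for \<alpha> g
  proof -
    have P: "\<forall>i<n. \<alpha> i \<in> paths X" and gG: "\<forall>i<n - 1. g i \<in> carrier G"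
      and link: "\<forall>i<n - 1. \<phi> (\<alpha> i 0) (g i) = \<alpha> (Suc i) 0"
      using that unfolding MG_space_def by (auto simp: topspace_path_space PiE_iff)
    have "orbit G \<phi> (\<alpha> i 0) = orbit G \<phi> (\<alpha> 0 0)" if "i < n" for i
      using that
    proof (induction i)
      case (Suc i)
      then have "\<alpha> i 0 \<in> topspace X" and i: "i < n - 1"
        using P by (auto intro: paths_in_topspace)
      then have "orbit G \<phi> (\<alpha> (Suc i) 0) = orbit G \<phi> (\<alpha> i 0)"
        using orbit_act[OF G act, of "\<alpha> i 0" "g i"] gG link by simp
      with Suc show ?case
        by simp
    qed simp
    then show ?thesis
      by (metis (no_types))
  qed
  show ?thesis
    unfolding MGn_space_def continuous_map_in_subtopology
  proof
    show "continuous_map (MG_space X G \<phi> n) (product_topology (\<lambda>_. path_space X) {..<n}) fst"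
      unfolding MG_space_def by (intro continuous_map_from_subtopology continuous_map_fst)
    show "fst \<in> topspace (MG_space X G \<phi> n)
        \<rightarrow> {\<alpha>. \<forall>i<n. \<forall>j<n. orbit G \<phi> (\<alpha> i 0) = orbit G \<phi> (\<alpha> j 0)}"
    proof
      fix e assume "e \<in> topspace (MG_space X G \<phi> n)"
      then have "(fst e, snd e) \<in> topspace (MG_space X G \<phi> n)"
        by simp
      from orbits[OF this]
      show "fst e \<in> {\<alpha>. \<forall>i<n. \<forall>j<n. orbit G \<phi> (\<alpha> i 0) = orbit G \<phi> (\<alpha> j 0)}"
        by (simp only: mem_Collect_eq)
    qed
  qed
qed

lemma MGn_space_start:
  assumes "\<alpha> \<in> topspace (MGn_space X G \<phi> n)" and "i < n"
  shows "\<alpha> i 0 \<in> topspace X"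
proof -
  have "\<alpha> \<in> topspace (product_topology (\<lambda>_. path_space X) {..<n})"
    using assms(1) unfolding MGn_space_def topspace_subtopology by (rule IntD1)
  with assms(2) show ?thesis
    by (auto simp: topspace_path_space PiE_iff intro: paths_in_topspace)
qed

lemma MGn_space_same_orbit:
  assumes "\<alpha> \<in> topspace (MGn_space X G \<phi> n)" and "i < n" and "j < n"
  shows "orbit G \<phi> (\<alpha> i 0) = orbit G \<phi> (\<alpha> j 0)"
  using assms unfolding MGn_space_def topspace_subtopology by blast

lemma continuous_map_MGn_eval:
  assumes "i < n"
  shows "continuous_map (MGn_space X G \<phi> n) X (\<lambda>\<alpha>. \<alpha> i 0)"
proof -
  have "continuous_map (product_topology (\<lambda>_. path_space X) {..<n}) X
      ((\<lambda>\<beta>. \<beta> 0) \<circ> (\<lambda>\<alpha>. \<alpha> i))"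
    using assms by (auto intro!: continuous_map_compose[OF continuous_map_product_projection]
        continuous_map_path_eval)
  then show ?thesis
    unfolding MGn_space_def by (simp add: o_def continuous_map_from_subtopology)
qed

definition MG_lift ::
  "('g, 'm) monoid_scheme \<Rightarrow> ('a \<Rightarrow> 'g \<Rightarrow> 'a) \<Rightarrow> nat \<Rightarrow> (nat \<Rightarrow> real \<Rightarrow> 'a)
    \<Rightarrow> (nat \<Rightarrow> real \<Rightarrow> 'a) \<times> (nat \<Rightarrow> 'g)" where
  "MG_lift G \<phi> n \<alpha> = (\<alpha>, \<lambda>i\<in>{..<n - 1}. THE g. g \<in> carrier G \<and> \<phi> (\<alpha> i 0) g = \<alpha> (Suc i) 0)"

lemma continuous_map_MG_lift:
  assumes G: "group G" and act: "right_action X G \<phi>" and pa: "principal_action X G \<phi>"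
  shows "continuous_map (MGn_space X G \<phi> n) (MG_space X G \<phi> n) (MG_lift G \<phi> n)"
proof -
  let ?M = "MGn_space X G \<phi> n"
  let ?link = "\<lambda>\<alpha> i. THE g. g \<in> carrier G \<and> \<phi> (\<alpha> i 0) g = \<alpha> (Suc i) 0"
  define S where "S = {(x, \<phi> x g) | x g. x \<in> topspace X \<and> g \<in> carrier G}"
  have link: "?link \<alpha> i \<in> carrier G \<and> \<phi> (\<alpha> i 0) (?link \<alpha> i) = \<alpha> (Suc i) 0"
    if \<alpha>: "\<alpha> \<in> topspace ?M" and i: "i < n - 1" for \<alpha> i
  proof -
    have "\<alpha> (Suc i) 0 \<in> orbit G \<phi> (\<alpha> (Suc i) 0)"
      using orbit_self[OF G act MGn_space_start[OF \<alpha>]] i by simp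
    then have "\<alpha> (Suc i) 0 \<in> orbit G \<phi> (\<alpha> i 0)"
      using MGn_space_same_orbit[OF \<alpha>, of "Suc i" i] i by simp
    then show ?thesis
      using principal_action_the_element[OF G act pa MGn_space_start[OF \<alpha>]] i by simp
  qed
  have "continuous_map ?M (discrete_topology (carrier G)) (\<lambda>\<alpha>. ?link \<alpha> k)"
    if k: "k < n - 1" for k
  proof -
    have "continuous_map ?M (subtopology (prod_topology X X) S) (\<lambda>\<alpha>. (\<alpha> k 0, \<alpha> (Suc k) 0))"
      unfolding continuous_map_in_subtopology
    proof
      show "continuous_map ?M (prod_topology X X) (\<lambda>\<alpha>. (\<alpha> k 0, \<alpha> (Suc k) 0))"
        using k by (intro continuous_map_pairedI continuous_map_MGn_eval) auto
      show "(\<lambda>\<alpha>. (\<alpha> k 0, \<alpha> (Suc k) 0)) \<in> topspace ?M \<rightarrow> S"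
      proof
        fix \<alpha> assume \<alpha>: "\<alpha> \<in> topspace ?M"
        have "\<alpha> k 0 \<in> topspace X"
          using MGn_space_start[OF \<alpha>] k by simp
        with link[OF \<alpha> k] show "(\<alpha> k 0, \<alpha> (Suc k) 0) \<in> S"
          unfolding S_def by force
      qed
    qed
    moreover have "continuous_map (subtopology (prod_topology X X) S) (discrete_topology (carrier G))
        (\<lambda>(x, y). THE g. g \<in> carrier G \<and> \<phi> x g = y)"
      using pa unfolding principal_action_def S_def by auto
    ultimately have "continuous_map ?M (discrete_topology (carrier G))
        ((\<lambda>(x, y). THE g. g \<in> carrier G \<and> \<phi> x g = y) \<circ> (\<lambda>\<alpha>. (\<alpha> k 0, \<alpha> (Suc k) 0)))"
      by (rule continuous_map_compose)
    then show ?thesis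
      by (simp add: o_def)
  qed
  then have "continuous_map ?M (product_topology (\<lambda>_. discrete_topology (carrier G)) {..<n - 1})
      (\<lambda>\<alpha>. \<lambda>i\<in>{..<n - 1}. ?link \<alpha> i)"
    unfolding continuous_map_componentwise by auto
  moreover have "continuous_map ?M (product_topology (\<lambda>_. path_space X) {..<n}) id"
    unfolding MGn_space_def by (simp add: continuous_map_from_subtopology)
  ultimately have "continuous_map ?M (prod_topology (product_topology (\<lambda>_. path_space X) {..<n})
      (product_topology (\<lambda>_. discrete_topology (carrier G)) {..<n - 1})) (MG_lift G \<phi> n)"
    unfolding MG_lift_def by (auto dest: continuous_map_pairedI[where f=id, simplified])
  moreover have "MG_lift G \<phi> n \<in> topspace ?M \<rightarrow>
      {(\<alpha>, g). \<forall>i<n - 1. \<phi> (\<alpha> i 0) (g i) = \<alpha> (Suc i) 0}"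
    using link by (auto simp: MG_lift_def)
  ultimately show ?thesis
    unfolding MG_space_def continuous_map_in_subtopology by blast
qed

theorem mainTheorem4:
  fixes X :: "'a topology" and G :: "('g, 'm) monoid_scheme"
    and \<phi> :: "'a \<Rightarrow> 'g \<Rightarrow> 'a" and n :: nat
  assumes "Hausdorff_space X" and "path_connected_space X"
    and "locally_path_connected_space X"
    and "group G" and "finite (carrier G)"
    and "right_action X G \<phi>" and "principal_action X G \<phi>"
    and "n \<ge> 2"
  shows "secat (MGn_space X G \<phi> n) (power_space X n) (eps_tilde n) = TC_effv X G \<phi> n"
proof (rule antisym)
  show "secat (MGn_space X G \<phi> n) (power_space X n) (eps_tilde n) \<le> TC_effv X G \<phi> n"
    unfolding TC_effv_def using continuous_map_MG_forget[OF assms(4,6)]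
    by (rule secat_le_fibrewise_map) (auto simp: eps_def eps_tilde_def)
  show "TC_effv X G \<phi> n \<le> secat (MGn_space X G \<phi> n) (power_space X n) (eps_tilde n)"
    unfolding TC_effv_def using continuous_map_MG_lift[OF assms(4,6,7)]
    by (rule secat_le_fibrewise_map) (simp add: MG_lift_def eps_def eps_tilde_def)
qed

end
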